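(* Let $G$ be a directed graph, let $a, b, k \geq 1$ be integers, and let $D$ be a well-linked set in $G$ of size $2(ab(2k-2)+1)$. If $G$ does not contain a family of $k$ directed cycles such that every vertex of $G$ is in at most two of the cycles, then there exist paths $P_1,\ldots,P_a$ in $G$ and sets $A_i, B_i \subseteq V(P_i)$ for $1 \leq i \leq a$ such that: (1) the paths $P_1,\ldots,P_a$ are pairwise vertex-disjoint; (2) the sets $A_1,B_1,\ldots,A_a,B_a$ each have size $b$ and are pairwise disjoint; (3) for every $1 \leq i \leq a$, all vertices of $A_i$ appear on $P_i$ before all vertices of $B_i$; (4) $\bigcup_{i=1}^a (A_i \cup B_i)$ is well-linked in $G$.
   Context: For $A,B\subseteq V(G)$ with $|A|=|B|$, a linkage from $A$ to $B$ is a set of $|A|$ pairwise vertex-disjoint directed paths each starting in $A$ and ending in $B$. A set $W\subseteq V(G)$ is well-linked if for all $A,B\subseteq W$ with $|A|=|B|$ there is a linkage from $A$ to $B$ in $G-(W\setminus(A\cup B))$. *)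

theory Defs
  imports Main
begin

definition is_path :: "'a set \<Rightarrow> ('a \<times> 'a) set \<Rightarrow> 'a list \<Rightarrow> bool" where
  "is_path V E P \<longleftrightarrow> P \<noteq> [] \<and> distinct P \<and> set P \<subseteq> V \<and>
     (\<forall>i. Suc i < length P \<longrightarrow> (P ! i, P ! Suc i) \<in> E)"

definition linkage_in :: "'a set \<Rightarrow> ('a \<times> 'a) set \<Rightarrow> 'a set \<Rightarrow> 'a set \<Rightarrow> 'a set \<Rightarrow> bool" where
  "linkage_in V E U A B \<longleftrightarrow> (\<exists>Ps :: 'a list set.
     finite Ps \<and> card Ps = card A \<and>
     (\<forall>P\<in>Ps. is_path V E P \<and> set P \<subseteq> U \<and> hd P \<in> A \<and> last P \<in> B) \<and>
     (\<forall>P\<in>Ps. \<forall>Q\<in>Ps. P \<noteq> Q \<longrightarrow> set P \<inter> set Q = {}))"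

definition well_linked :: "'a set \<Rightarrow> ('a \<times> 'a) set \<Rightarrow> 'a set \<Rightarrow> bool" where
  "well_linked V E W \<longleftrightarrow> W \<subseteq> V \<and>
     (\<forall>A B. A \<subseteq> W \<longrightarrow> B \<subseteq> W \<longrightarrow> card A = card B \<longrightarrow>
        linkage_in V E (V - (W - (A \<union> B))) A B)"

definition is_cycle :: "'a set \<Rightarrow> ('a \<times> 'a) set \<Rightarrow> 'a list \<Rightarrow> bool" where
  "is_cycle V E C \<longleftrightarrow> C \<noteq> [] \<and> distinct C \<and> set C \<subseteq> V \<and>
     (\<forall>i < length C. (C ! i, C ! (Suc i mod length C)) \<in> E)"

definition cycle_edges :: "'a list \<Rightarrow> ('a \<times> 'a) set" where
  "cycle_edges C = {(C ! i, C ! (Suc i mod length C)) | i. i < length C}"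

definition half_integral_cycle_packing :: "'a set \<Rightarrow> ('a \<times> 'a) set \<Rightarrow> nat \<Rightarrow> bool" where
  "half_integral_cycle_packing V E k \<longleftrightarrow> (\<exists>Cs :: 'a list list.
     length Cs = k \<and> (\<forall>C\<in>set Cs. is_cycle V E C) \<and>
     (\<forall>i<k. \<forall>j<k. i \<noteq> j \<longrightarrow> cycle_edges (Cs ! i) \<noteq> cycle_edges (Cs ! j)) \<and>
     (\<forall>v\<in>V. card {i. i < k \<and> v \<in> set (Cs ! i)} \<le> 2))"

end

theory Submission
  imports Defs
begin

(*
  Split D into halves X and Y of equal size. Well-linkedness gives linkages from X to Y and from
  Y to X; a path of the first followed by a path of the second leads from X back to X, so the paths
  combine into closed walks that cover D and pass through every vertex at most twice. Decomposing
  them into cycles gives cycles covering D with every vertex on at most two of them.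

  If one of these cycles meets D in at least 2ab vertices, cutting it into a consecutive pieces
  with 2b vertices of D each and splitting the D-vertices of each piece into its first b and its
  last b gives the paths P_i and the sets A_i, B_i; they lie in D, and subsets of a well-linked set
  are well-linked. Otherwise the cycles with pairwise distinct edge sets still cover D but meet it
  in at most 2ab - 1 vertices each, so since |D| > (k - 1)(2ab - 1) there are at least k of them,
  a half-integral packing of k cycles.
*)

abbreviation walk :: "('a \<times> 'a) set \<Rightarrow> 'a list \<Rightarrow> bool" where
  "walk E xs \<equiv> successively (\<lambda>x y. (x, y) \<in> E) xs"

lemma is_path_iff_walk: "is_path V E P \<longleftrightarrow> P \<noteq> [] \<and> distinct P \<and> set P \<subseteq> V \<and> walk E P"
  unfolding is_path_def successively_conv_nth by blast

lemma walk_infixD: "walk E (xs @ ys @ zs) \<Longrightarrow> walk E ys"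
  by (simp add: successively_append_iff)

lemma is_cycleI:
  assumes "C \<noteq> []" "distinct C" "set C \<subseteq> V" "walk E C" "(last C, hd C) \<in> E"
  shows "is_cycle V E C"
  unfolding is_cycle_def
proof (intro conjI assms allI impI)
  fix i assume i: "i < length C"
  show "(C ! i, C ! (Suc i mod length C)) \<in> E"
  proof (cases "Suc i < length C")
    case True
    then show ?thesis using successively_nth[OF assms(4) True] by simp
  next
    case False
    then have "i = length C - 1" using i by simp
    then show ?thesis using assms(1,5) by (simp add: last_conv_nth hd_conv_nth)
  qed
qed

lemma is_cycle_walk: "is_cycle V E C \<Longrightarrow> walk E C"
  unfolding is_cycle_def successively_conv_nth by (metis Suc_lessD mod_less)

lemma set_cycle_edges: "C \<noteq> [] \<Longrightarrow> fst ` cycle_edges C = set C"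
  unfolding cycle_edges_def by (auto simp: set_conv_nth image_iff)

lemma count_list_distinct: "distinct xs \<Longrightarrow> count_list xs v = (if v \<in> set xs then 1 else 0)"
  by (induction xs) auto

lemma sum_count_list_disjoint_le_1:
  assumes "finite I" "\<forall>i\<in>I. distinct (f i)"
    and "\<forall>i\<in>I. \<forall>j\<in>I. i \<noteq> j \<longrightarrow> set (f i) \<inter> set (f j) = {}"
  shows "(\<Sum>i\<in>I. count_list (f i) v) \<le> 1"
proof (cases "\<exists>i\<in>I. v \<in> set (f i)")
  case True
  then obtain i where i: "i \<in> I" "v \<in> set (f i)" by blast
  have "(\<Sum>j\<in>I. count_list (f j) v) = (\<Sum>j\<in>I. if j = i then 1 else 0)"
    using assms(2,3) i by (intro sum.cong) (auto simp: count_list_distinct)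
  then show ?thesis using i assms(1) by simp
qed (auto simp: count_list_0_iff)

definition cycle_cover :: "'a set \<Rightarrow> ('a \<times> 'a) set \<Rightarrow> 'a list list \<Rightarrow> 'a set \<Rightarrow> ('a \<Rightarrow> nat) \<Rightarrow> bool"
  where "cycle_cover V E Cs S m \<longleftrightarrow> (\<forall>C\<in>set Cs. is_cycle V E C) \<and> S \<subseteq> (\<Union>C\<in>set Cs. set C) \<and>
     (\<forall>v. length (filter (\<lambda>C. v \<in> set C) Cs) \<le> m v)"

lemma cycle_cover_Nil: "cycle_cover V E [] {} m"
  by (simp add: cycle_cover_def)

lemma cycle_cover_append:
  "cycle_cover V E Cs S m \<Longrightarrow> cycle_cover V E Cs' S' m' \<Longrightarrow>
     cycle_cover V E (Cs @ Cs') (S \<union> S') (\<lambda>v. m v + m' v)"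
  unfolding cycle_cover_def by (auto intro: add_mono)

lemma cycle_cover_mono:
  "cycle_cover V E Cs S m \<Longrightarrow> S' \<subseteq> S \<Longrightarrow> (\<And>v. m v \<le> m' v) \<Longrightarrow> cycle_cover V E Cs S' m'"
  unfolding cycle_cover_def by (meson order_trans)

lemma closed_walk_cycle_cover:
  assumes "w \<noteq> []" "walk E w" "(last w, hd w) \<in> E" "set w \<subseteq> V"
  shows "\<exists>Cs. cycle_cover V E Cs (set w) (count_list w)"
  using assms
proof (induction "length w" arbitrary: w rule: less_induct)
  case less
  show ?case
  proof (cases "distinct w")
    case True
    then have "is_cycle V E w" using less.prems by (intro is_cycleI) auto
    then have "cycle_cover V E [w] (set w) (count_list w)"
      using True by (auto simp: cycle_cover_def count_list_distinct)
    then show ?thesis ..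
  next
    case False
    then obtain xs y ys zs where w: "w = xs @ [y] @ ys @ [y] @ zs"
      using not_distinct_decomp by blast
    let ?w1 = "y # ys" and ?w2 = "xs @ y # zs"
    have "walk E (?w1 @ [y])"
      using less.prems(2) walk_infixD[of E xs "?w1 @ [y]" zs] unfolding w by simp
    then have "walk E ?w1" "(last ?w1, hd ?w1) \<in> E"
      by (subst (asm) successively_append_iff, simp)+
    then obtain Cs1 where Cs1: "cycle_cover V E Cs1 (set ?w1) (count_list ?w1)"
      using less.hyps[of ?w1] less.prems(4) unfolding w by auto
    have "walk E (xs @ [y])" "walk E (y # zs)"
      using less.prems(2) walk_infixD[of E "[]" "xs @ [y]"] walk_infixD[of E "xs @ [y] @ ys" "[y] @ zs" "[]"]
      unfolding w by simp_all
    then have "walk E ?w2" by (auto simp: successively_append_iff)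
    moreover have "(last ?w2, hd ?w2) \<in> E"
      using less.prems(3) unfolding w by (cases xs; cases zs) auto
    ultimately obtain Cs2 where Cs2: "cycle_cover V E Cs2 (set ?w2) (count_list ?w2)"
      using less.hyps[of ?w2] less.prems(4) unfolding w by auto
    from Cs1 Cs2 have "cycle_cover V E (Cs1 @ Cs2) (set ?w1 \<union> set ?w2)
        (\<lambda>v. count_list ?w1 v + count_list ?w2 v)"
      by (rule cycle_cover_append)
    moreover have "set w = set ?w1 \<union> set ?w2" unfolding w by auto
    moreover have "count_list w = (\<lambda>v. count_list ?w1 v + count_list ?w2 v)"
      unfolding w by (simp add: fun_eq_iff)
    ultimately show ?thesis by auto
  qed
qed

text \<open>Along each cycle of the permutation \<open>\<sigma>\<close> the walks \<open>seg i\<close> concatenate to a closed walk.\<close>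
definition closed_walk_family ::
    "'a set \<Rightarrow> ('a \<times> 'a) set \<Rightarrow> 'i set \<Rightarrow> ('i \<Rightarrow> 'i) \<Rightarrow> ('i \<Rightarrow> 'a list) \<Rightarrow> bool"
  where "closed_walk_family V E I \<sigma> seg \<longleftrightarrow> finite I \<and> inj_on \<sigma> I \<and> \<sigma> ` I \<subseteq> I \<and>
     (\<forall>i\<in>I. seg i \<noteq> [] \<and> walk E (seg i) \<and> set (seg i) \<subseteq> V \<and> (last (seg i), hd (seg (\<sigma> i))) \<in> E)"

lemma closed_walk_family_remove_fixpoint:
  assumes "closed_walk_family V E I \<sigma> seg" "\<sigma> i = i"
  shows "closed_walk_family V E (I - {i}) \<sigma> seg"
  using assms unfolding closed_walk_family_def inj_on_def by auto

lemma closed_walk_family_merge: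
  assumes fam: "closed_walk_family V E I \<sigma> seg" and i: "i \<in> I" "\<sigma> i \<noteq> i"
  shows "closed_walk_family V E (I - {\<sigma> i}) (\<sigma>(i := \<sigma> (\<sigma> i))) (seg(i := seg i @ seg (\<sigma> i)))"
proof -
  let ?j = "\<sigma> i" and ?I = "I - {\<sigma> i}" and ?\<sigma> = "\<sigma>(i := \<sigma> (\<sigma> i))"
  let ?seg = "seg(i := seg i @ seg (\<sigma> i))"
  have inj: "inj_on \<sigma> I" and maps: "\<sigma> ` I \<subseteq> I"
    and seg: "\<And>l. l \<in> I \<Longrightarrow> seg l \<noteq> [] \<and> walk E (seg l) \<and> set (seg l) \<subseteq> V \<and>
      (last (seg l), hd (seg (\<sigma> l))) \<in> E"
    using fam unfolding closed_walk_family_def by auto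
  have j: "?j \<in> I" "\<sigma> ?j \<noteq> ?j" using i inj maps by (auto dest: inj_onD)
  have "inj_on ?\<sigma> ?I"
  proof (rule inj_onI)
    fix x y assume "x \<in> ?I" "y \<in> ?I" "?\<sigma> x = ?\<sigma> y"
    then show "x = y" using i j inj by (cases "x = i"; cases "y = i") (auto dest: inj_onD)
  qed
  moreover have "?\<sigma> ` ?I \<subseteq> ?I" using i j inj maps by (auto dest: inj_onD)
  moreover have "hd (?seg l) = hd (seg l)" for l using seg[OF i(1)] by simp
  ultimately show ?thesis
    using fam i j seg unfolding closed_walk_family_def by (auto simp: successively_append_iff)
qed

lemma UN_set_merge:
  assumes "i \<in> I" "j \<in> I" "i \<noteq> j"
  shows "(\<Union>l\<in>I - {j}. set ((seg(i := seg i @ seg j)) l)) = (\<Union>l\<in>I. set (seg l))"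
proof (intro equalityI subsetI)
  fix x assume "x \<in> (\<Union>l\<in>I. set (seg l))"
  then obtain l where l: "l \<in> I" "x \<in> set (seg l)" by blast
  show "x \<in> (\<Union>l\<in>I - {j}. set ((seg(i := seg i @ seg j)) l))"
  proof (cases "l = j \<or> l = i")
    case True
    then show ?thesis using assms l by (intro UN_I[of i]) auto
  next
    case False
    then show ?thesis using l by (intro UN_I[of l]) auto
  qed
qed (use assms in \<open>auto split: if_splits\<close>)

lemma sum_count_list_merge:
  assumes "finite I" "i \<in> I" "j \<in> I" "i \<noteq> j"
  shows "(\<Sum>l\<in>I - {j}. count_list ((seg(i := seg i @ seg j)) l) v) = (\<Sum>l\<in>I. count_list (seg l) v)"
proof -
  have "(\<Sum>l\<in>I - {j}. count_list ((seg(i := seg i @ seg j)) l) v)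
      = (\<Sum>l\<in>I - {j}. count_list (seg l) v + (if l = i then count_list (seg j) v else 0))"
    by (intro sum.cong) auto
  also have "\<dots> = count_list (seg j) v + (\<Sum>l\<in>I - {j}. count_list (seg l) v)"
    using assms by (simp add: sum.distrib)
  also have "\<dots> = (\<Sum>l\<in>I. count_list (seg l) v)"
    by (rule sum.remove[OF assms(1,3), symmetric])
  finally show ?thesis .
qed

lemma closed_walk_family_cycle_cover:
  assumes "closed_walk_family V E I \<sigma> seg"
  shows "\<exists>Cs. cycle_cover V E Cs (\<Union>i\<in>I. set (seg i)) (\<lambda>v. \<Sum>i\<in>I. count_list (seg i) v)"
  using assms
proof (induction "card I" arbitrary: I \<sigma> seg rule: less_induct)
  case less
  have fin: "finite I" using less.prems unfolding closed_walk_family_def by simp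
  consider "I = {}" | i where "i \<in> I" "\<sigma> i = i" | i where "i \<in> I" "\<sigma> i \<noteq> i" by blast
  then show ?case
  proof cases
    case 1
    then show ?thesis using cycle_cover_Nil by fastforce
  next
    case (2 i)
    have "card (I - {i}) < card I" using fin 2(1) by (rule card_Diff1_less)
    then obtain Cs where "cycle_cover V E Cs (\<Union>l\<in>I - {i}. set (seg l))
        (\<lambda>v. \<Sum>l\<in>I - {i}. count_list (seg l) v)"
      using less.hyps closed_walk_family_remove_fixpoint[OF less.prems 2(2)] by blast
    moreover have "seg i \<noteq> [] \<and> walk E (seg i) \<and> (last (seg i), hd (seg i)) \<in> E \<and> set (seg i) \<subseteq> V"
      using less.prems 2 unfolding closed_walk_family_def by force
    then obtain Cs' where "cycle_cover V E Cs' (set (seg i)) (count_list (seg i))"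
      using closed_walk_cycle_cover by blast
    ultimately have "cycle_cover V E (Cs' @ Cs) (set (seg i) \<union> (\<Union>l\<in>I - {i}. set (seg l)))
        (\<lambda>v. count_list (seg i) v + (\<Sum>l\<in>I - {i}. count_list (seg l) v))"
      by (intro cycle_cover_append)
    moreover have "set (seg i) \<union> (\<Union>l\<in>I - {i}. set (seg l)) = (\<Union>l\<in>I. set (seg l))"
      using 2 by blast
    moreover have "(\<lambda>v. count_list (seg i) v + (\<Sum>l\<in>I - {i}. count_list (seg l) v))
        = (\<lambda>v. \<Sum>l\<in>I. count_list (seg l) v)"
      using 2 fin by (simp add: sum.remove)
    ultimately show ?thesis by auto
  next
    case (3 i)
    let ?j = "\<sigma> i" and ?seg = "seg(i := seg i @ seg (\<sigma> i))"
    have j: "?j \<in> I" using less.prems 3 unfolding closed_walk_family_def by auto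
    have "card (I - {?j}) < card I" using fin j by (rule card_Diff1_less)
    then obtain Cs where "cycle_cover V E Cs (\<Union>l\<in>I - {?j}. set (?seg l))
        (\<lambda>v. \<Sum>l\<in>I - {?j}. count_list (?seg l) v)"
      using less.hyps closed_walk_family_merge[OF less.prems 3] by blast
    then have "cycle_cover V E Cs (\<Union>l\<in>I. set (seg l)) (\<lambda>v. \<Sum>l\<in>I. count_list (seg l) v)"
      by (simp only: UN_set_merge[OF 3(1) j 3(2)[symmetric]] sum_count_list_merge[OF fin 3(1) j 3(2)[symmetric]])
    then show ?thesis ..
  qed
qed

lemma linkage_in_paths:
  assumes "linkage_in V E U A B" "finite A" "card A = card B" "finite B"
  obtains p where "\<forall>x\<in>A. is_path V E (p x) \<and> hd (p x) = x"
    and "\<forall>x\<in>A. \<forall>y\<in>A. x \<noteq> y \<longrightarrow> set (p x) \<inter> set (p y) = {}"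
    and "bij_betw (last \<circ> p) A B"
proof -
  obtain Ps where Ps: "finite Ps" "card Ps = card A"
     "\<forall>P\<in>Ps. is_path V E P \<and> hd P \<in> A \<and> last P \<in> B"
     "\<forall>P\<in>Ps. \<forall>Q\<in>Ps. P \<noteq> Q \<longrightarrow> set P \<inter> set Q = {}"
    using assms(1) unfolding linkage_in_def by blast
  have ne: "P \<noteq> []" if "P \<in> Ps" for P using Ps(3) that unfolding is_path_def by auto
  have "inj_on hd Ps" "inj_on last Ps"
    using Ps(4) ne by (auto intro!: inj_onI) (metis disjoint_iff hd_in_set last_in_set)+
  moreover have "hd ` Ps = A" "last ` Ps = B"
    using Ps(2,3) assms(2,3,4) calculation card_subset_eq[of A "hd ` Ps"] card_subset_eq[of B "last ` Ps"]
    by (auto simp: card_image)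
  ultimately have hd: "bij_betw hd Ps A" and last: "bij_betw last Ps B"
    by (auto simp: bij_betw_def)
  define p where "p = inv_into Ps hd"
  have p: "bij_betw p A Ps" unfolding p_def using hd by (rule bij_betw_inv_into)
  show ?thesis
  proof
    show "\<forall>x\<in>A. is_path V E (p x) \<and> hd (p x) = x"
      using Ps(3) p hd unfolding p_def by (auto simp: bij_betw_def f_inv_into_f inv_into_into)
    show "\<forall>x\<in>A. \<forall>y\<in>A. x \<noteq> y \<longrightarrow> set (p x) \<inter> set (p y) = {}"
      using Ps(4) p by (metis bij_betw_iff_bijections)
    show "bij_betw (last \<circ> p) A B" using p last by (rule bij_betw_trans)
  qed
qed

lemma hd_butlast_tl_last: "xs \<noteq> [] \<Longrightarrow> hd xs \<noteq> last xs \<Longrightarrow> xs = hd xs # butlast (tl xs) @ [last xs]"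
  by (cases xs) auto

lemma path_join_walk:
  assumes P: "is_path V E P" and Q: "is_path V E Q" and "hd Q = last P" "hd Q \<noteq> last Q"
  defines "w \<equiv> P @ butlast (tl Q)"
  shows "w \<noteq> [] \<and> walk E w \<and> set w \<subseteq> V \<and> (last w, last Q) \<in> E \<and> hd w = hd P \<and> set P \<subseteq> set w"
    and "count_list w v \<le> count_list P v + count_list Q v"
proof -
  define M where "M = butlast (tl Q)"
  have Q_eq: "Q = last P # M @ [last Q]"
    using Q assms(3,4) hd_butlast_tl_last[of Q] unfolding M_def is_path_def by simp
  have "is_path V E (last P # M @ [last Q])" using Q by (subst (asm) Q_eq)
  then have "walk E ((P @ M) @ [last Q])" "set M \<subseteq> V"
    using P unfolding is_path_iff_walk by (auto simp: successively_append_iff successively_Cons)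
  then have "walk E (P @ M) \<and> (last (P @ M), last Q) \<in> E \<and> set (P @ M) \<subseteq> V"
    using P unfolding is_path_def by (subst (asm) successively_append_iff) simp
  then show "w \<noteq> [] \<and> walk E w \<and> set w \<subseteq> V \<and> (last w, last Q) \<in> E \<and> hd w = hd P \<and> set P \<subseteq> set w"
    using P unfolding w_def M_def is_path_def by simp
  have "count_list M v \<le> count_list (last P # M @ [last Q]) v" by simp
  then show "count_list w v \<le> count_list P v + count_list Q v"
    using Q_eq unfolding w_def M_def by simp
qed

lemma sum_count_list_linkages_le_2:
  assumes "finite X" "finite Y" "bij_betw f X Y"
    and "\<forall>x\<in>X. distinct (p x)" "\<forall>x\<in>X. \<forall>x'\<in>X. x \<noteq> x' \<longrightarrow> set (p x) \<inter> set (p x') = {}"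
    and "\<forall>y\<in>Y. distinct (q y)" "\<forall>y\<in>Y. \<forall>y'\<in>Y. y \<noteq> y' \<longrightarrow> set (q y) \<inter> set (q y') = {}"
  shows "(\<Sum>x\<in>X. count_list (p x) v + count_list (q (f x)) v) \<le> 2"
proof -
  have "(\<Sum>x\<in>X. count_list (q (f x)) v) = (\<Sum>y\<in>Y. count_list (q y) v)"
    using sum.reindex_bij_betw[OF assms(3), of "\<lambda>y. count_list (q y) v"] by simp
  moreover have "(\<Sum>x\<in>X. count_list (p x) v) \<le> 1"
    using assms(1,4,5) by (rule sum_count_list_disjoint_le_1)
  moreover have "(\<Sum>y\<in>Y. count_list (q y) v) \<le> 1"
    using assms(2,6,7) by (rule sum_count_list_disjoint_le_1)
  ultimately show ?thesis by (simp add: sum.distrib)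
qed

lemma linkages_cycle_cover:
  assumes XY: "X \<inter> Y = {}" "finite X" "finite Y" "card X = card Y"
    and "linkage_in V E U X Y" "linkage_in V E U' Y X"
  shows "\<exists>Cs. cycle_cover V E Cs (X \<union> Y) (\<lambda>_. 2)"
proof -
  obtain p where p: "\<forall>x\<in>X. is_path V E (p x) \<and> hd (p x) = x"
      "\<forall>x\<in>X. \<forall>x'\<in>X. x \<noteq> x' \<longrightarrow> set (p x) \<inter> set (p x') = {}"
    and bp: "bij_betw (last \<circ> p) X Y"
    using linkage_in_paths[OF assms(5) XY(2,4,3)] by blast
  obtain q where q: "\<forall>y\<in>Y. is_path V E (q y) \<and> hd (q y) = y"
      "\<forall>y\<in>Y. \<forall>y'\<in>Y. y \<noteq> y' \<longrightarrow> set (q y) \<inter> set (q y') = {}"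
    and bq: "bij_betw (last \<circ> q) Y X"
    using linkage_in_paths[OF assms(6) XY(3) XY(4)[symmetric] XY(2)] by blast
  \<comment> \<open>\<open>seg x\<close> runs along \<open>p x\<close> into \<open>Y\<close> and back along \<open>r x\<close>, stopping just before \<open>\<sigma> x \<in> X\<close>.\<close>
  define r where "r x = q (last (p x))" for x
  define \<sigma> where "\<sigma> x = last (r x)" for x
  define seg where "seg x = p x @ butlast (tl (r x))" for x
  have \<sigma>: "bij_betw \<sigma> X X"
    using bij_betw_trans[OF bp bq] unfolding \<sigma>_def r_def by (simp add: comp_def)
  have join: "is_path V E (p x) \<and> is_path V E (r x) \<and> hd (r x) = last (p x) \<and> hd (r x) \<noteq> last (r x)"
    if "x \<in> X" for x
    using p(1) q(1) XY(1) bij_betwE[OF bp] bij_betwE[OF \<sigma>] that unfolding r_def \<sigma>_def by fastforce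
  have seg: "seg x \<noteq> [] \<and> walk E (seg x) \<and> set (seg x) \<subseteq> V \<and> (last (seg x), \<sigma> x) \<in> E \<and>
      hd (seg x) = x \<and> set (p x) \<subseteq> set (seg x)" if "x \<in> X" for x
    using path_join_walk(1)[of V E "p x" "r x"] join[OF that] p(1) that unfolding seg_def \<sigma>_def by auto
  have "closed_walk_family V E X \<sigma> seg"
    unfolding closed_walk_family_def
  proof (intro conjI ballI)
    show "finite X" "inj_on \<sigma> X" "\<sigma> ` X \<subseteq> X" using XY(2) \<sigma> by (auto simp: bij_betw_def)
    fix x assume x: "x \<in> X"
    then have "hd (seg (\<sigma> x)) = \<sigma> x" using seg bij_betwE[OF \<sigma>] by blast
    then show "seg x \<noteq> []" "walk E (seg x)" "set (seg x) \<subseteq> V" "(last (seg x), hd (seg (\<sigma> x))) \<in> E"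
      using seg[OF x] by simp_all
  qed
  then obtain Cs where Cs: "cycle_cover V E Cs (\<Union>x\<in>X. set (seg x)) (\<lambda>v. \<Sum>x\<in>X. count_list (seg x) v)"
    using closed_walk_family_cycle_cover by blast
  have cover: "X \<union> Y \<subseteq> (\<Union>x\<in>X. set (seg x))"
  proof -
    have "x \<in> set (seg x) \<and> last (p x) \<in> set (seg x)" if "x \<in> X" for x
      using seg[OF that] p(1) that hd_in_set[of "seg x"] last_in_set[of "p x"]
      unfolding is_path_def by auto
    moreover have "Y = (last \<circ> p) ` X" using bp by (simp add: bij_betw_def)
    ultimately show ?thesis by (simp only: image_comp[symmetric]) blast
  qed
  have mult: "(\<Sum>x\<in>X. count_list (seg x) v) \<le> 2" for v
  proof -
    have "count_list (seg x) v \<le> count_list (p x) v + count_list (r x) v" if "x \<in> X" for x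
      using path_join_walk(2)[of V E "p x" "r x"] join[OF that] unfolding seg_def by blast
    then have "(\<Sum>x\<in>X. count_list (seg x) v) \<le> (\<Sum>x\<in>X. count_list (p x) v + count_list (r x) v)"
      by (rule sum_mono)
    also have "\<dots> \<le> 2"
      using sum_count_list_linkages_le_2[OF XY(2,3) bp, of p q v] p q unfolding r_def is_path_def by auto
    finally show ?thesis .
  qed
  from Cs cover mult show ?thesis by (blast intro: cycle_cover_mono)
qed

lemma well_linked_subset:
  assumes "well_linked V E W" "W' \<subseteq> W"
  shows "well_linked V E W'"
  unfolding well_linked_def
proof (intro conjI allI impI)
  show "W' \<subseteq> V" using assms unfolding well_linked_def by auto
next
  fix A B assume "A \<subseteq> W'" "B \<subseteq> W'" "card A = card B"
  then have "linkage_in V E (V - (W - (A \<union> B))) A B"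
    using assms unfolding well_linked_def by auto
  moreover have "V - (W - (A \<union> B)) \<subseteq> V - (W' - (A \<union> B))" using assms(2) by auto
  ultimately show "linkage_in V E (V - (W' - (A \<union> B))) A B"
    unfolding linkage_in_def by blast
qed

lemma well_linked_linkage:
  assumes "well_linked V E W" "X \<union> Y = W" "card X = card Y"
  shows "linkage_in V E V X Y"
  using assms unfolding well_linked_def by (metis Diff_cancel Diff_empty Un_upper1 Un_upper2)

lemma well_linked_cycle_cover:
  assumes "well_linked V E D" "finite D" "even (card D)"
  shows "\<exists>Cs. cycle_cover V E Cs D (\<lambda>_. 2)"
proof -
  obtain X where X: "X \<subseteq> D" "card X = card D div 2"
    using obtain_subset_with_card_n[of "card D div 2" D] by auto
  define Y where "Y = D - X"
  have "card Y = card X" unfolding Y_def using X assms(2,3) finite_subset[OF X(1) assms(2)]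
    by (auto simp: card_Diff_subset elim!: evenE)
  moreover have "X \<inter> Y = {}" "X \<union> Y = D" "finite X" "finite Y"
    unfolding Y_def using X assms(2) finite_subset by auto
  ultimately show ?thesis
    using linkages_cycle_cover well_linked_linkage[OF assms(1)] by (metis sup_commute)
qed

lemma half_integral_cycle_packingI:
  assumes "finite S" "card S = k" "\<forall>C\<in>S. is_cycle V E C" "inj_on cycle_edges S"
    and "\<forall>v. card {C\<in>S. v \<in> set C} \<le> 2"
  shows "half_integral_cycle_packing V E k"
proof -
  obtain Cs where Cs: "set Cs = S" "distinct Cs" using finite_distinct_list[OF assms(1)] by blast
  then have len: "length Cs = k" using assms(2) distinct_card by fastforce
  show ?thesis unfolding half_integral_cycle_packing_def
  proof (intro exI[of _ Cs] conjI ballI allI impI)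
    show "length Cs = k" by (fact len)
    show "is_cycle V E C" if "C \<in> set Cs" for C using that Cs assms(3) by blast
    show "cycle_edges (Cs ! i) \<noteq> cycle_edges (Cs ! j)" if "i < k" "j < k" "i \<noteq> j" for i j
      using that Cs len assms(4) by (metis inj_on_eq_iff nth_eq_iff_index_eq nth_mem)
    fix v
    have "card {i. i < k \<and> v \<in> set (Cs ! i)} = length (filter (\<lambda>C. v \<in> set C) Cs)"
      using len by (simp add: length_filter_conv_card)
    also have "\<dots> = card {C\<in>S. v \<in> set C}"
      using Cs distinct_card[of "filter (\<lambda>C. v \<in> set C) Cs"] by simp
    finally show "card {i. i < k \<and> v \<in> set (Cs ! i)} \<le> 2" using assms(5) by simp
  qed
qed

lemma cycle_edges_representatives:
  assumes "finite T" "\<forall>C\<in>T. is_cycle V E C"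
  obtains S where "S \<subseteq> T" "inj_on cycle_edges S" "(\<Union>C\<in>T. set C) \<subseteq> (\<Union>C\<in>S. set C)"
proof
  define rep where "rep = inv_into T cycle_edges"
  show S: "rep ` cycle_edges ` T \<subseteq> T" unfolding rep_def by (auto intro: inv_into_into)
  have rep: "cycle_edges (rep (cycle_edges C)) = cycle_edges C" if "C \<in> T" for C
    unfolding rep_def using that by (simp add: f_inv_into_f)
  then show "inj_on cycle_edges (rep ` cycle_edges ` T)" by (auto intro: inj_onI)
  have "set (rep (cycle_edges C)) = set C" if "C \<in> T" for C
  proof -
    have "rep (cycle_edges C) \<in> T" using S that by blast
    then have "rep (cycle_edges C) \<noteq> []" "C \<noteq> []" using assms(2) that by (auto simp: is_cycle_def)
    then show ?thesis using set_cycle_edges rep[OF that] by metis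
  qed
  then show "(\<Union>C\<in>T. set C) \<subseteq> (\<Union>C\<in>rep ` cycle_edges ` T. set C)" by auto
qed

lemma cycle_cover_half_integral_packing:
  assumes cover: "cycle_cover V E Cs D (\<lambda>_. 2)" and "finite D"
    and small: "\<forall>C\<in>set Cs. card (set C \<inter> D) \<le> m" and big: "(k - 1) * m < card D"
  shows "half_integral_cycle_packing V E k"
proof -
  have cyc: "\<forall>C\<in>set Cs. is_cycle V E C" using cover unfolding cycle_cover_def by blast
  then obtain S where S: "S \<subseteq> set Cs" "inj_on cycle_edges S" "(\<Union>C\<in>set Cs. set C) \<subseteq> (\<Union>C\<in>S. set C)"
    using cycle_edges_representatives[of "set Cs"] by blast
  have "D \<subseteq> (\<Union>C\<in>set Cs. set C)" using cover unfolding cycle_cover_def by simp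
  then have cov: "D \<subseteq> (\<Union>C\<in>S. set C \<inter> D)" using S(3) by (simp add: subset_iff)
  have fin: "finite S" using S finite_subset by blast
  have "card D \<le> card (\<Union>C\<in>S. set C \<inter> D)" by (rule card_mono) (use fin cov in auto)
  also have "\<dots> \<le> (\<Sum>C\<in>S. card (set C \<inter> D))" using fin by (rule card_UN_le)
  also have "\<dots> \<le> card S * m" using S(1) small sum_bounded_above[of S "\<lambda>C. card (set C \<inter> D)" m] by auto
  finally have "card D \<le> card S * m" .
  have "k \<le> card S"
  proof (rule ccontr)
    assume "\<not> k \<le> card S"
    then have "card S * m \<le> (k - 1) * m" by (intro mult_le_mono1) simp
    then show False using \<open>card D \<le> card S * m\<close> big by linarith
  qed
  then obtain S' where S': "S' \<subseteq> S" "card S' = k" by (meson obtain_subset_with_card_n)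
  show ?thesis
  proof (rule half_integral_cycle_packingI)
    show "finite S'" "card S' = k" using S' fin finite_subset by auto
    show "\<forall>C\<in>S'. is_cycle V E C" using S S' cyc by blast
    show "inj_on cycle_edges S'" using S(2) S'(1) by (rule inj_on_subset)
    show "\<forall>v. card {C\<in>S'. v \<in> set C} \<le> 2"
    proof
      fix v
      have "card {C\<in>S'. v \<in> set C} \<le> card (set (filter (\<lambda>C. v \<in> set C) Cs))"
        using S S' by (intro card_mono) auto
      also have "\<dots> \<le> length (filter (\<lambda>C. v \<in> set C) Cs)" by (rule card_length)
      also have "\<dots> \<le> 2" using cover unfolding cycle_cover_def by blast
      finally show "card {C\<in>S'. v \<in> set C} \<le> 2" .
    qed
  qed
qed

lemma split_list_filter_length:
  "n \<le> length (filter Q xs) \<Longrightarrow> \<exists>ys zs. xs = ys @ zs \<and> length (filter Q ys) = n"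
proof (induction xs arbitrary: n)
  case (Cons x xs)
  show ?case
  proof (cases "n = 0")
    case True
    then show ?thesis by (intro exI[of _ "[]"] exI[of _ "x # xs"]) simp
  next
    case False
    then obtain ys zs where "xs = ys @ zs" "length (filter Q ys) = (if Q x then n - 1 else n)"
      using Cons by (metis Suc_le_mono Suc_pred' bot_nat_0.not_eq_extremum filter.simps(2) length_Cons)
    then show ?thesis using False by (intro exI[of _ "x # ys"] exI[of _ zs]) auto
  qed
qed simp

lemma card_set_inter_eq_length_filter:
  "distinct xs \<Longrightarrow> card (set xs \<inter> D) = length (filter (\<lambda>v. v \<in> D) xs)"
  using distinct_card[of "filter (\<lambda>v. v \<in> D) xs"] by (simp add: Int_commute Collect_conj_eq)

definition ordered_halves ::
    "'a set \<Rightarrow> ('a \<times> 'a) set \<Rightarrow> 'a set \<Rightarrow> nat \<Rightarrow> 'a list \<Rightarrow> 'a set \<Rightarrow> 'a set \<Rightarrow> bool"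
  where "ordered_halves V E D b P A B \<longleftrightarrow> is_path V E P \<and> A \<subseteq> set P \<inter> D \<and> B \<subseteq> set P \<inter> D \<and>
     card A = b \<and> card B = b \<and> A \<inter> B = {} \<and>
     (\<forall>x\<in>A. \<forall>y\<in>B. \<exists>m n. m < n \<and> n < length P \<and> P ! m = x \<and> P ! n = y)"

lemma ordered_halves_exist:
  assumes "distinct P" "walk E P" "set P \<subseteq> V" "b \<ge> 1" "length (filter (\<lambda>v. v \<in> D) P) = 2 * b"
  shows "\<exists>A B. ordered_halves V E D b P A B"
proof -
  obtain P1 P2 where P: "P = P1 @ P2" "length (filter (\<lambda>v. v \<in> D) P1) = b"
    using split_list_filter_length[of b "\<lambda>v. v \<in> D" P] assms(5) by auto
  have d: "distinct P1" "distinct P2" "set P1 \<inter> set P2 = {}" using assms(1) P by auto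
  define A where "A = set P1 \<inter> D"
  define B where "B = set P2 \<inter> D"
  have "card A = b" "card B = b"
    using P assms(5) card_set_inter_eq_length_filter[OF d(1)] card_set_inter_eq_length_filter[OF d(2)]
    unfolding A_def B_def by simp_all
  moreover have "P \<noteq> []" using assms(4,5) by auto
  moreover have "\<exists>m n. m < n \<and> n < length P \<and> P ! m = x \<and> P ! n = y" if "x \<in> A" "y \<in> B" for x y
  proof -
    have "x \<in> set P1" "y \<in> set P2" using that unfolding A_def B_def by auto
    then obtain m n where "m < length P1" "P1 ! m = x" "n < length P2" "P2 ! n = y"
      by (auto simp: in_set_conv_nth)
    then show ?thesis using P by (intro exI[of _ m] exI[of _ "length P1 + n"]) (auto simp: nth_append)
  qed
  ultimately have "ordered_halves V E D b P A B"
    using assms d unfolding ordered_halves_def is_path_iff_walk A_def B_def P by auto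
  then show ?thesis by blast
qed

lemma disjoint_ordered_halves_exist:
  assumes "distinct C" "walk E C" "set C \<subseteq> V" "b \<ge> 1" "2 * b * a \<le> length (filter (\<lambda>v. v \<in> D) C)"
  shows "\<exists>P A B. (\<forall>i\<in>{1..a}. ordered_halves V E D b (P i) (A i) (B i) \<and> set (P i) \<subseteq> set C) \<and>
     (\<forall>i\<in>{1..a}. \<forall>j\<in>{1..a}. i \<noteq> j \<longrightarrow> set (P i) \<inter> set (P j) = {})"
  using assms
proof (induction a arbitrary: C)
  case 0
  then show ?case by simp
next
  case (Suc a)
  obtain C1 C2 where C: "C = C1 @ C2" "length (filter (\<lambda>v. v \<in> D) C1) = 2 * b"
    using split_list_filter_length[of "2 * b" "\<lambda>v. v \<in> D" C] Suc.prems(5) by auto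
  have d: "distinct C1" "distinct C2" "set C1 \<inter> set C2 = {}" using Suc.prems(1) C by auto
  have w: "walk E C1" "walk E C2" using Suc.prems(2) C by (auto simp: successively_append_iff)
  obtain P A B where PAB: "\<forall>i\<in>{1..a}. ordered_halves V E D b (P i) (A i) (B i) \<and> set (P i) \<subseteq> set C2"
      "\<forall>i\<in>{1..a}. \<forall>j\<in>{1..a}. i \<noteq> j \<longrightarrow> set (P i) \<inter> set (P j) = {}"
    using Suc.IH[of C2] d w Suc.prems C by auto
  obtain A' B' where "ordered_halves V E D b C1 A' B'"
    using ordered_halves_exist[of C1 E V b D] d w C Suc.prems by auto
  then have "\<forall>i\<in>{1..Suc a}. ordered_halves V E D b ((P(Suc a := C1)) i) ((A(Suc a := A')) i)
      ((B(Suc a := B')) i) \<and> set ((P(Suc a := C1)) i) \<subseteq> set C"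
    using PAB(1) C by (auto simp: le_Suc_eq)
  moreover have "\<forall>i\<in>{1..Suc a}. \<forall>j\<in>{1..Suc a}. i \<noteq> j \<longrightarrow>
      set ((P(Suc a := C1)) i) \<inter> set ((P(Suc a := C1)) j) = {}"
  proof (intro ballI impI)
    fix i j assume ij: "i \<in> {1..Suc a}" "j \<in> {1..Suc a}" "i \<noteq> j"
    have C1: "set (P l) \<inter> set C1 = {}" if "l \<in> {1..a}" for l using PAB(1) that d(3) by blast
    consider "i = Suc a" "j \<in> {1..a}" | "j = Suc a" "i \<in> {1..a}" | "i \<in> {1..a}" "j \<in> {1..a}"
      using ij by fastforce
    then show "set ((P(Suc a := C1)) i) \<inter> set ((P(Suc a := C1)) j) = {}"
      by cases (use C1 PAB(2) ij in auto)
  qed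
  ultimately show ?case by blast
qed

theorem lemma19:
  fixes V :: "'a set" and E :: "('a \<times> 'a) set" and D :: "'a set" and a b k :: nat
  assumes "finite V" and "E \<subseteq> V \<times> V"
    and "a \<ge> 1" and "b \<ge> 1" and "k \<ge> 1"
    and "D \<subseteq> V" and "card D = 2 * (a * b * (2 * k - 2) + 1)"
    and "well_linked V E D"
    and "\<not> half_integral_cycle_packing V E k"
  shows "\<exists>(P :: nat \<Rightarrow> 'a list) (A :: nat \<Rightarrow> 'a set) (B :: nat \<Rightarrow> 'a set).
    (\<forall>i\<in>{1..a}. is_path V E (P i) \<and> A i \<subseteq> set (P i) \<and> B i \<subseteq> set (P i)) \<and>
    (\<forall>i\<in>{1..a}. \<forall>j\<in>{1..a}. i \<noteq> j \<longrightarrow> set (P i) \<inter> set (P j) = {}) \<and>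
    (\<forall>i\<in>{1..a}. card (A i) = b \<and> card (B i) = b \<and> A i \<inter> B i = {}) \<and>
    (\<forall>i\<in>{1..a}. \<forall>j\<in>{1..a}. i \<noteq> j \<longrightarrow>
        A i \<inter> A j = {} \<and> A i \<inter> B j = {} \<and> B i \<inter> B j = {}) \<and>
    (\<forall>i\<in>{1..a}. \<forall>x\<in>A i. \<forall>y\<in>B i.
        \<exists>m n. m < n \<and> n < length (P i) \<and> P i ! m = x \<and> P i ! n = y) \<and>
    well_linked V E (\<Union>i\<in>{1..a}. A i \<union> B i)"
proof -
  have "finite D" using assms(1,6) finite_subset by blast
  then obtain Cs where cover: "cycle_cover V E Cs D (\<lambda>_. 2)"
    using well_linked_cycle_cover[OF assms(8)] assms(7) by auto
  have "(k - 1) * (2 * a * b - 1) < card D"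
    using assms(7) by (simp add: diff_mult_distrib diff_mult_distrib2 algebra_simps)
  then obtain C where C: "C \<in> set Cs" "2 * b * a \<le> card (set C \<inter> D)"
    using cycle_cover_half_integral_packing[OF cover \<open>finite D\<close>, where m = "2 * a * b - 1"] assms(9)
    by (force simp: not_le mult.commute mult.left_commute)
  have "is_cycle V E C" using cover C(1) unfolding cycle_cover_def by blast
  then have "distinct C" "walk E C" "set C \<subseteq> V" by (auto simp: is_cycle_def is_cycle_walk)
  moreover have "2 * b * a \<le> length (filter (\<lambda>v. v \<in> D) C)"
    using C(2) card_set_inter_eq_length_filter[OF \<open>distinct C\<close>] by simp
  ultimately obtain P A B where PAB: "\<forall>i\<in>{1..a}. ordered_halves V E D b (P i) (A i) (B i)"
      "\<forall>i\<in>{1..a}. \<forall>j\<in>{1..a}. i \<noteq> j \<longrightarrow> set (P i) \<inter> set (P j) = {}"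
    using disjoint_ordered_halves_exist[of C E V b a D] assms(4) by blast
  have halves: "is_path V E (P i) \<and> A i \<subseteq> set (P i) \<and> B i \<subseteq> set (P i) \<and>
      card (A i) = b \<and> card (B i) = b \<and> A i \<inter> B i = {} \<and>
      (\<forall>x\<in>A i. \<forall>y\<in>B i. \<exists>m n. m < n \<and> n < length (P i) \<and> P i ! m = x \<and> P i ! n = y)"
    if "i \<in> {1..a}" for i
    using PAB(1) that unfolding ordered_halves_def by blast
  have "well_linked V E (\<Union>i\<in>{1..a}. A i \<union> B i)"
    using PAB(1) by (intro well_linked_subset[OF assms(8)]) (auto simp: ordered_halves_def)
  moreover have "A i \<inter> A j = {} \<and> A i \<inter> B j = {} \<and> B i \<inter> B j = {}"
    if "i \<in> {1..a}" "j \<in> {1..a}" "i \<noteq> j" for i j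
    using halves[OF that(1)] halves[OF that(2)] PAB(2) that by blast
  ultimately show ?thesis using halves PAB(2) by (intro exI[of _ P] exI[of _ A] exI[of _ B]) simp
qed

end
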